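(* Assume that for each $i\in I_n$, every equilibrium $u\in\mathbb{R}^n_+$ of the system lying in $\pi_i$ satisfies $\alpha_iu<1$. Then the system has a unique equilibrium $x^*\in\operatorname{int}\mathbb{R}^n_+$, and $x^*\le Y$.
   Context: Fix $n\ge 1$ and $I_n=\{1,\dots,n\}$. Consider the Lotka–Volterra system $x_i'=b_ix_i(1-\alpha_ix)$, $i\in I_n$, where $b_i>0$, $\alpha_i=(a_{i1},\dots,a_{in})$ with $a_{ii}>0$ and $a_{ij}\ge 0$, on $\mathbb{R}^n_+$; $\le$ is componentwise. $Y=(a_{11}^{-1},\dots,a_{nn}^{-1})^T$, $\pi_i=\{x\in\mathbb{R}^n_+:x_i=0\}$. *)

theory Defs
  imports "HOL-Analysis.Analysis"
begin

text \<open>Lotka-Volterra system x_i' = b_i x_i (1 - alpha_i x) on R^n_+, with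
  alpha_i the i-th row of the interaction matrix A (so alpha_i x = (A$i) \<bullet> x).\<close>

definition nonneg_orthant :: "(real ^ 'n) set" where
  "nonneg_orthant = {x. \<forall>i. 0 \<le> x $ i}"

definition LV_field :: "real ^ 'n \<Rightarrow> real ^ 'n ^ 'n \<Rightarrow> real ^ 'n \<Rightarrow> real ^ 'n" where
  "LV_field b A x = (\<chi> i. b $ i * x $ i * (1 - (A $ i) \<bullet> x))"

definition LV_equilibrium :: "real ^ 'n \<Rightarrow> real ^ 'n ^ 'n \<Rightarrow> real ^ 'n \<Rightarrow> bool" where
  "LV_equilibrium b A u \<longleftrightarrow> u \<in> nonneg_orthant \<and> LV_field b A u = 0"

definition coord_face :: "'n \<Rightarrow> (real ^ 'n) set" where
  "coord_face i = {x \<in> nonneg_orthant. x $ i = 0}"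

end

theory Submission
  imports Defs
begin

(* For b > 0 an equilibrium u of the Lotka-Volterra system is a
   nonnegative vector with, for every i, u_i = 0 or alpha_i u = 1; it lies in
   the open orthant iff it is a positive solution of the linear system A x = 1.
   Existence: Brouwer's fixed point theorem applied to the truncated map
     x  |->  (max 0 (min Y_i (x_i + 1 - alpha_i x)))_i
   on the box [0, Y] gives a point with x_i = 0 and alpha_i x >= 1, or with
   alpha_i x = 1, in every coordinate; it is an equilibrium, and the
   hypothesis on boundary equilibria rules out zero coordinates.
   Uniqueness: if x /= y are positive solutions of A x = 1, moving from x along
   the line towards y one first hits a face pi_k at a point z that is still a
   solution of A z = 1, hence a boundary equilibrium with alpha_k z = 1,
   contradicting the hypothesis.
   Bound: for a positive solution, a_ii x_i <= alpha_i x = 1, i.e. x <= Y. *)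

lemma interior_orthant_iff:
  "(x::real^'n) \<in> interior nonneg_orthant \<longleftrightarrow> (\<forall>i. 0 < x $ i)"
proof
  assume x: "x \<in> interior nonneg_orthant"
  show "\<forall>i. 0 < x $ i"
  proof
    fix i
    have "nonneg_orthant \<subseteq> {y::real^'n. y $ i \<ge> 0}" by (auto simp: nonneg_orthant_def)
    then have "interior nonneg_orthant \<subseteq> interior {y::real^'n. y $ i \<ge> 0}"
      by (rule interior_mono)
    with x show "0 < x $ i" using interior_halfspace_component_ge by auto
  qed
next
  assume pos: "\<forall>i. 0 < x $ i"
  have "open {y::real^'n. \<forall>i. 0 < y $ i}"
    by (simp add: Collect_all_eq open_INT open_halfspace_component_gt_cart)
  moreover have "{y::real^'n. \<forall>i. 0 < y $ i} \<subseteq> nonneg_orthant"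
    by (auto simp: nonneg_orthant_def less_imp_le)
  ultimately have "{y::real^'n. \<forall>i. 0 < y $ i} \<subseteq> interior nonneg_orthant"
    by (rule interior_maximal[rotated])
  with pos show "x \<in> interior nonneg_orthant" by blast
qed

lemma LV_equilibrium_iff:
  assumes b_pos: "\<forall>i. 0 < b $ i"
  shows "LV_equilibrium b A u \<longleftrightarrow>
         (\<forall>i. 0 \<le> u $ i) \<and> (\<forall>i. u $ i = 0 \<or> (A $ i) \<bullet> u = 1)"
  using b_pos
  by (auto simp: LV_equilibrium_def LV_field_def nonneg_orthant_def vec_eq_iff
           dest: less_imp_neq[symmetric])

lemma interior_equilibrium_iff:
  assumes b_pos: "\<forall>i. 0 < b $ i"
  shows "x \<in> interior nonneg_orthant \<and> LV_equilibrium b A x \<longleftrightarrow>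
         (\<forall>i. 0 < x $ i \<and> (A $ i) \<bullet> x = 1)"
  unfolding interior_orthant_iff LV_equilibrium_iff[OF b_pos]
  by (metis less_imp_le less_irrefl)

lemma diag_le_row_inner:
  assumes "\<forall>j. 0 \<le> A $ i $ j" "\<forall>j. 0 \<le> (x::real^'n) $ j"
  shows "A $ i $ i * x $ i \<le> (A $ i) \<bullet> x"
  unfolding inner_vec_def inner_real_def
  by (rule member_le_sum[where f="\<lambda>j. A $ i $ j * x $ j"]) (auto simp: assms)

text \<open>Coordinatewise analysis of a fixed point of the truncated map: with
  r = alpha_i x, a = a_ii and a Y = 1, a fixed coordinate is either 0 with
  r >= 1, or positive with r = 1.\<close>
lemma truncated_fixpoint_cases:
  fixes x y a r :: real
  assumes fixed: "x = max 0 (min y (x + 1 - r))"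
    and y: "0 < y" "a * y = 1" and diag: "a * x \<le> r"
  shows "(x = 0 \<and> 1 \<le> r) \<or> (0 < x \<and> r = 1)"
proof (cases "x = y")
  case True
  then show ?thesis using fixed y diag by auto
qed (use fixed y in \<open>auto simp: max_def min_def split: if_splits\<close>)

lemma complementarity_point_exists:
  fixes A :: "real ^ 'n ^ 'n"
  assumes diag_pos: "\<forall>i. 0 < A $ i $ i"
    and offdiag_nonneg: "\<forall>i j. 0 \<le> A $ i $ j"
  obtains x :: "real ^ 'n"
  where "\<forall>i. 0 \<le> x $ i" "\<forall>i. (x $ i = 0 \<and> 1 \<le> (A $ i) \<bullet> x) \<or> (A $ i) \<bullet> x = 1"
proof -
  define Y :: "real ^ 'n" where "Y = (\<chi> i. 1 / A $ i $ i)"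
  have Y_pos: "0 < Y $ i" and AY: "A $ i $ i * Y $ i = 1" for i
    using diag_pos[rule_format, of i] by (simp_all add: Y_def)
  define f :: "real ^ 'n \<Rightarrow> real ^ 'n"
    where "f = (\<lambda>x. \<chi> i. max 0 (min (Y $ i) (x $ i + 1 - A $ i \<bullet> x)))"
  have "continuous_on (cbox 0 Y) f"
    unfolding f_def by (intro continuous_intros)
  moreover have "f \<in> cbox 0 Y \<rightarrow> cbox 0 Y"
    using Y_pos by (auto simp: f_def mem_box_cart less_imp_le)
  moreover have "(0::real ^ 'n) \<in> cbox 0 Y"
    using Y_pos by (simp add: mem_box_cart less_imp_le)
  then have "cbox 0 Y \<noteq> {}" by blast
  ultimately obtain x where x_box: "x \<in> cbox 0 Y" and fx: "f x = x"
    using brouwer[OF compact_cbox convex_box(1)] by blast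
  have x_nonneg: "\<forall>i. 0 \<le> x $ i" using x_box by (simp add: mem_box_cart)
  have "(x $ i = 0 \<and> 1 \<le> A $ i \<bullet> x) \<or> (0 < x $ i \<and> A $ i \<bullet> x = 1)" for i
  proof (rule truncated_fixpoint_cases)
    show "x $ i = max 0 (min (Y $ i) (x $ i + 1 - A $ i \<bullet> x))"
      using fx by (simp add: f_def vec_eq_iff)
    show "A $ i $ i * x $ i \<le> A $ i \<bullet> x"
      using offdiag_nonneg x_nonneg by (intro diag_le_row_inner) auto
  qed (use Y_pos AY in auto)
  then show ?thesis using that x_nonneg by blast
qed

lemma line_exits_orthant:
  fixes x y :: "real ^ 'n"
  assumes x_pos: "\<forall>i. 0 < x $ i" and j: "y $ j < x $ j"
  obtains t k where "\<forall>l. 0 \<le> ((1 - t) *\<^sub>R x + t *\<^sub>R y) $ l"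
    and "((1 - t) *\<^sub>R x + t *\<^sub>R y) $ k = 0"
proof -
  define J where "J = {l. y $ l < x $ l}"
  define g where "g = (\<lambda>l. x $ l / (x $ l - y $ l))"
  define t where "t = Min (g ` J)"
  have "j \<in> J" using j by (simp add: J_def)
  then have "t \<in> g ` J" unfolding t_def by (intro Min_in) auto
  then obtain k where k: "k \<in> J" "t = g k" by auto
  have t_le: "t \<le> g l" if "l \<in> J" for l unfolding t_def using that by simp
  have t_pos: "0 < t" using k x_pos by (simp add: g_def J_def)
  define z where "z = (1 - t) *\<^sub>R x + t *\<^sub>R y"
  have z_comp: "z $ l = x $ l - t * (x $ l - y $ l)" for l
    by (simp add: z_def algebra_simps)
  have "0 \<le> z $ l" for l
  proof (cases "l \<in> J")
    case True
    then have "0 < x $ l - y $ l" by (simp add: J_def)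
    with t_le[OF True] have "t * (x $ l - y $ l) \<le> x $ l" by (simp add: g_def le_divide_eq)
    then show ?thesis by (simp add: z_comp)
  next
    case False
    then have "t * (x $ l - y $ l) \<le> 0"
      using t_pos by (simp add: J_def mult_nonneg_nonpos)
    then show ?thesis using x_pos[rule_format, of l] z_comp[of l] by linarith
  qed
  moreover have "z $ k = 0" using k by (simp add: z_comp g_def J_def)
  ultimately show ?thesis using that unfolding z_def by blast
qed

text \<open>If no boundary equilibrium u in a face pi_i satisfies alpha_i u = 1
  (which the hypothesis of the theorem guarantees), then the linear system
  A x = 1 has at most one positive solution: two of them would yield, on
  the line through them, such a boundary equilibrium.\<close>
lemma positive_solution_unique:
  fixes b :: "real ^ 'n" and A :: "real ^ 'n ^ 'n"
  assumes b_pos: "\<forall>i. 0 < b $ i"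
    and boundary: "\<forall>i u. LV_equilibrium b A u \<and> u \<in> coord_face i \<longrightarrow> (A $ i) \<bullet> u < 1"
    and x: "\<forall>i. 0 < x $ i \<and> (A $ i) \<bullet> x = 1"
    and y: "\<forall>i. 0 < y $ i \<and> (A $ i) \<bullet> y = 1"
  shows "x = y"
proof (rule ccontr)
  have no_smaller: False if u: "\<forall>i. 0 < u $ i \<and> (A $ i) \<bullet> u = 1"
      and v: "\<forall>i. (A $ i) \<bullet> v = 1" and j: "v $ j < u $ j" for u v j
  proof -
    obtain t k where z_nonneg: "\<forall>l. 0 \<le> ((1 - t) *\<^sub>R u + t *\<^sub>R v) $ l"
      and z_k: "((1 - t) *\<^sub>R u + t *\<^sub>R v) $ k = 0"
      using line_exits_orthant[of u v j] u j by blast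
    define z where "z = (1 - t) *\<^sub>R u + t *\<^sub>R v"
    have Az: "(A $ i) \<bullet> z = 1" for i
      using u v by (simp add: z_def inner_add_right algebra_simps)
    have "LV_equilibrium b A z"
      using z_nonneg Az by (simp add: LV_equilibrium_iff[OF b_pos] z_def)
    moreover have "z \<in> coord_face k"
      using z_nonneg z_k by (simp add: coord_face_def nonneg_orthant_def z_def)
    ultimately have "(A $ k) \<bullet> z < 1" using boundary by blast
    with Az show False by simp
  qed
  assume "x \<noteq> y"
  then obtain j where "x $ j \<noteq> y $ j" by (auto simp: vec_eq_iff)
  then consider "y $ j < x $ j" | "x $ j < y $ j" by linarith
  then show False
    by cases (use no_smaller[of x y j] no_smaller[of y x j] x y in auto)
qed

lemma positive_solution_le_Y:
  fixes A :: "real ^ 'n ^ 'n"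
  assumes diag_pos: "\<forall>i. 0 < A $ i $ i"
    and offdiag_nonneg: "\<forall>i j. 0 \<le> A $ i $ j"
    and x: "\<forall>i. 0 < x $ i \<and> (A $ i) \<bullet> x = 1"
  shows "x \<le> (\<chi> i. 1 / A $ i $ i)"
  unfolding less_eq_vec_def
proof
  fix i
  have "A $ i $ i * x $ i \<le> 1"
    using diag_le_row_inner[of A i x] offdiag_nonneg x by (auto intro: less_imp_le)
  then show "x $ i \<le> (\<chi> i. 1 / A $ i $ i) $ i"
    using diag_pos by (simp add: le_divide_eq mult.commute)
qed

theorem lemma5p1:
  fixes b :: "real ^ 'n" and A :: "real ^ 'n ^ 'n"
  assumes b_pos: "\<forall>i. 0 < b $ i"
    and diag_pos: "\<forall>i. 0 < A $ i $ i"
    and offdiag_nonneg: "\<forall>i j. 0 \<le> A $ i $ j"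
    and hyp: "\<forall>i u. LV_equilibrium b A u \<and> u \<in> coord_face i \<longrightarrow> (A $ i) \<bullet> u < 1"
  shows "(\<exists>!x. x \<in> interior nonneg_orthant \<and> LV_equilibrium b A x) \<and>
         (\<forall>x. x \<in> interior nonneg_orthant \<and> LV_equilibrium b A x
              \<longrightarrow> x \<le> (\<chi> i. 1 / A $ i $ i))"
  unfolding interior_equilibrium_iff[OF b_pos]
proof (intro conjI allI impI)
  obtain x where x_nonneg: "\<forall>i. 0 \<le> x $ i"
    and x_compl: "\<forall>i. (x $ i = 0 \<and> 1 \<le> (A $ i) \<bullet> x) \<or> (A $ i) \<bullet> x = 1"
    using complementarity_point_exists[OF diag_pos offdiag_nonneg] by blast
  have x_eq: "LV_equilibrium b A x"
    using x_nonneg x_compl by (auto simp: LV_equilibrium_iff[OF b_pos])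
  have "0 < x $ i \<and> (A $ i) \<bullet> x = 1" for i
  proof -
    have "x $ i = 0 \<Longrightarrow> x \<in> coord_face i"
      using x_nonneg by (simp add: coord_face_def nonneg_orthant_def)
    then show ?thesis
      using hyp x_eq x_compl[rule_format, of i] x_nonneg[rule_format, of i] by force
  qed
  then show "\<exists>!x. \<forall>i. 0 < x $ i \<and> (A $ i) \<bullet> x = 1"
    using positive_solution_unique[OF b_pos hyp] by blast
next
  fix x assume "\<forall>i. 0 < x $ i \<and> (A $ i) \<bullet> x = 1"
  then show "x \<le> (\<chi> i. 1 / A $ i $ i)"
    using positive_solution_le_Y[OF diag_pos offdiag_nonneg] by blast
qed

end
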